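(* Let $r_2$ be an admissible trajectory, and let $G$, $\tau$, $T$, $e$ be as in the context. Let $G_1=\mathbb R\times(0,\infty)\times S_2$ where $S_2=\{r\in\mathbb R^3:|r|=1\}$, regarded as a $C^\infty$ manifold. Then the map $\phi:G\to G_1$, $\phi(r_1,t)=(\tau(r_1,t),T(r_1,t),e(r_1,t))$, is a bijection of $G$ onto $G_1$ with inverse $\psi(\tau,T,e)=(r_2(\tau)+Te,\ \tau+T)$, and $\phi$ is a diffeomorphism of class $C^1$. If $r_2$ is of class $C^\infty$, then $\phi$ is a $C^\infty$ diffeomorphism.
   Context: Units with $c=1$. A function $r_2:\mathbb R\to\mathbb R^3$ is an admissible trajectory if it has continuous derivatives up to order 3, $|\dot r_2(t)|<1$ for all $t$, and for every $t_1$ one has $\sup_{u\le t_1}|\dot r_2(u)|<1$ and $\sup_{u\le t_1}|\ddot r_2(u)|<\infty$. For $(r_1,t)\in\mathbb R^3\times\mathbb R$, the retarded time $\tau(r_1,t)$ is the unique $\tau\le t$ with $\tau=t-|r_1-r_2(\tau)|$; the delay is $T=t-\tau$; $G=\{(r_1,t)\in\mathbb R^3\times\mathbb R:T(r_1,t)>0\}$ is the open set of events not on the trajectory; on $G$, $e=(r_1-r_2(\tau))/T$. *)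

theory Defs
  imports "HOL-Analysis.Analysis"
begin

text \<open>D ds is the iterated partial derivative along the directions in the list ds
  (the head of the list being the last derivative taken).\<close>
definition Ck_on :: "nat \<Rightarrow> ('a::euclidean_space \<Rightarrow> 'b::real_normed_vector) \<Rightarrow> 'a set \<Rightarrow> bool" where
  "Ck_on k f S \<longleftrightarrow>
     (\<exists>D :: 'a list \<Rightarrow> 'a \<Rightarrow> 'b.
        (\<forall>x\<in>S. D [] x = f x) \<and>
        (\<forall>ds. length ds \<le> k \<and> set ds \<subseteq> Basis \<longrightarrow> continuous_on S (D ds)) \<and>
        (\<forall>ds i. length ds < k \<and> set ds \<subseteq> Basis \<and> i \<in> Basis \<longrightarrow>
           (\<forall>x\<in>S. ((\<lambda>s. D ds (x + s *\<^sub>R i)) has_vector_derivative D (i # ds) x) (at 0))))"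

definition Cinf_on :: "('a::euclidean_space \<Rightarrow> 'b::real_normed_vector) \<Rightarrow> 'a set \<Rightarrow> bool" where
  "Cinf_on f S \<longleftrightarrow> (\<forall>k. Ck_on k f S)"

definition vel :: "(real \<Rightarrow> real^3) \<Rightarrow> real \<Rightarrow> real^3" where
  "vel r2 u = vector_derivative r2 (at u)"

definition acc :: "(real \<Rightarrow> real^3) \<Rightarrow> real \<Rightarrow> real^3" where
  "acc r2 u = vector_derivative (vel r2) (at u)"

definition admissible :: "(real \<Rightarrow> real^3) \<Rightarrow> bool" where
  "admissible r2 \<longleftrightarrow>
     Ck_on 3 r2 UNIV \<and>
     (\<forall>t. norm (vel r2 t) < 1) \<and>
     (\<forall>t1. bdd_above ((\<lambda>u. norm (vel r2 u)) ` {..t1}) \<and>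
           (SUP u\<in>{..t1}. norm (vel r2 u)) < 1) \<and>
     (\<forall>t1. bdd_above ((\<lambda>u. norm (acc r2 u)) ` {..t1}))"

definition ret_time :: "(real \<Rightarrow> real^3) \<Rightarrow> real^3 \<Rightarrow> real \<Rightarrow> real" where
  "ret_time r2 r1 t = (THE \<tau>. \<tau> \<le> t \<and> \<tau> = t - norm (r1 - r2 \<tau>))"

definition delay :: "(real \<Rightarrow> real^3) \<Rightarrow> real^3 \<Rightarrow> real \<Rightarrow> real" where
  "delay r2 r1 t = t - ret_time r2 r1 t"

definition Gset :: "(real \<Rightarrow> real^3) \<Rightarrow> ((real^3) \<times> real) set" where
  "Gset r2 = {(r1, t). delay r2 r1 t > 0}"

definition edir :: "(real \<Rightarrow> real^3) \<Rightarrow> real^3 \<Rightarrow> real \<Rightarrow> real^3" where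
  "edir r2 r1 t = (1 / delay r2 r1 t) *\<^sub>R (r1 - r2 (ret_time r2 r1 t))"

definition G1 :: "(real \<times> real \<times> (real^3)) set" where
  "G1 = {(\<tau>, T, e). T > 0 \<and> norm e = 1}"

definition phi :: "(real \<Rightarrow> real^3) \<Rightarrow> (real^3) \<times> real \<Rightarrow> real \<times> real \<times> (real^3)" where
  "phi r2 = (\<lambda>(r1, t). (ret_time r2 r1 t, delay r2 r1 t, edir r2 r1 t))"

definition psi :: "(real \<Rightarrow> real^3) \<Rightarrow> real \<times> real \<times> (real^3) \<Rightarrow> (real^3) \<times> real" where
  "psi r2 = (\<lambda>(\<tau>, T, e). (r2 \<tau> + T *\<^sub>R e, \<tau> + T))"

definition Ck_on_sub :: "nat \<Rightarrow> ('a::euclidean_space \<Rightarrow> 'b::real_normed_vector) \<Rightarrow> 'a set \<Rightarrow> bool" where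
  "Ck_on_sub k f M \<longleftrightarrow> (\<exists>U g. open U \<and> M \<subseteq> U \<and> Ck_on k g U \<and> (\<forall>x\<in>M. g x = f x))"

definition Cinf_on_sub :: "('a::euclidean_space \<Rightarrow> 'b::real_normed_vector) \<Rightarrow> 'a set \<Rightarrow> bool" where
  "Cinf_on_sub f M \<longleftrightarrow> (\<exists>U g. open U \<and> M \<subseteq> U \<and> Cinf_on g U \<and> (\<forall>x\<in>M. g x = f x))"

end

theory Submission
  imports Defs
begin

text \<open>
  (1) A recursive notion Ck_fd k f S of k-fold continuous Frechet
      differentiability, which is closed under sums, bilinear products,
      composition, inversion and pairing, and which implies the
      partial-derivative notion Ck_on of the definitions (the converse holds
      for curves on the whole real line).
  (2) Two facts about zeros of parametrised real equations: the zero of a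
      strictly increasing family depends continuously on the parameter, and
      an implicit-function statement computing its derivative.
  (3) For an admissible trajectory, the light-cone equation s + |r1 - r2 s| = t
      is strictly increasing in s (speed < 1), so the retarded time exists and
      is unique; by (2) it is C^1 with derivative (dt - e . dr1) / (1 - e . v),
      and by induction it is C^k whenever r2 is.
\<close>

section \<open>Continuously differentiable maps via Frechet derivatives\<close>

fun Ck_fd :: "nat \<Rightarrow> ('a::euclidean_space \<Rightarrow> 'b::real_normed_vector) \<Rightarrow> 'a set \<Rightarrow> bool" where
  "Ck_fd 0 f S \<longleftrightarrow> continuous_on S f"
| "Ck_fd (Suc k) f S \<longleftrightarrow>
     (\<exists>f'. (\<forall>x\<in>S. (f has_derivative f' x) (at x)) \<and> (\<forall>i\<in>Basis. Ck_fd k (\<lambda>x. f' x i) S))"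

lemma Ck_fd_continuous: "Ck_fd k f S \<Longrightarrow> continuous_on S f"
proof (cases k)
  case (Suc m)
  assume "Ck_fd k f S"
  then obtain f' where "\<forall>x\<in>S. (f has_derivative f' x) (at x)" using Suc by auto
  then show ?thesis
    by (meson continuous_at_imp_continuous_on has_derivative_continuous)
qed simp

lemma Ck_fd_Suc_imp: "Ck_fd (Suc k) f S \<Longrightarrow> Ck_fd k f S"
proof (induction k arbitrary: f)
  case 0
  show ?case using Ck_fd_continuous[OF "0.prems"] by simp
next
  case (Suc k)
  then obtain f' where "\<forall>x\<in>S. (f has_derivative f' x) (at x)"
      "\<forall>i\<in>Basis. Ck_fd (Suc k) (\<lambda>x. f' x i) S"
    by (simp only: Ck_fd.simps) blast
  with Suc.IH show ?case by (simp only: Ck_fd.simps) blast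
qed

lemma Ck_fd_le: "m \<le> k \<Longrightarrow> Ck_fd k f S \<Longrightarrow> Ck_fd m f S"
  by (induction k rule: dec_induct) (blast dest: Ck_fd_Suc_imp)+

lemma Ck_fd_const: "Ck_fd k (\<lambda>x. c) S"
proof (induction k arbitrary: c)
  case (Suc k)
  show ?case by (simp only: Ck_fd.simps) (rule exI[of _ "\<lambda>x h. 0"], auto intro: Suc.IH)
qed simp

lemma Ck_fd_ident: "Ck_fd k (\<lambda>x. x) S"
proof (cases k)
  case (Suc m)
  show ?thesis unfolding Suc
    by (simp only: Ck_fd.simps) (rule exI[of _ "\<lambda>x h. h"], auto intro: Ck_fd_const)
qed (simp add: continuous_on_id)

lemma Ck_fd_add: "Ck_fd k f S \<Longrightarrow> Ck_fd k g S \<Longrightarrow> Ck_fd k (\<lambda>x. f x + g x) S"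
proof (induction k arbitrary: f g)
  case 0
  then show ?case by (simp add: continuous_on_add)
next
  case (Suc k)
  obtain f' where f': "\<forall>x\<in>S. (f has_derivative f' x) (at x)" "\<forall>i\<in>Basis. Ck_fd k (\<lambda>x. f' x i) S"
    using Suc.prems(1) by (simp only: Ck_fd.simps) blast
  obtain g' where g': "\<forall>x\<in>S. (g has_derivative g' x) (at x)" "\<forall>i\<in>Basis. Ck_fd k (\<lambda>x. g' x i) S"
    using Suc.prems(2) by (simp only: Ck_fd.simps) blast
  show ?case
    by (simp only: Ck_fd.simps, rule exI[of _ "\<lambda>x h. f' x h + g' x h"])
      (use f' g' Suc.IH in \<open>auto intro: has_derivative_add\<close>)
qed

lemma Ck_fd_sum:
  "finite A \<Longrightarrow> (\<And>j. j \<in> A \<Longrightarrow> Ck_fd k (F j) S) \<Longrightarrow> Ck_fd k (\<lambda>x. \<Sum>j\<in>A. F j x) S"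
  by (induction A rule: finite_induct) (simp_all add: Ck_fd_const Ck_fd_add)

lemma Ck_fd_linear: "bounded_linear L \<Longrightarrow> Ck_fd k f S \<Longrightarrow> Ck_fd k (\<lambda>x. L (f x)) S"
proof (induction k arbitrary: f)
  case 0
  then show ?case using bounded_linear.continuous_on[of L S f] by simp
next
  case (Suc k)
  obtain f' where f': "\<forall>x\<in>S. (f has_derivative f' x) (at x)" "\<forall>i\<in>Basis. Ck_fd k (\<lambda>x. f' x i) S"
    using Suc.prems(2) by (simp only: Ck_fd.simps) blast
  show ?case
    by (simp only: Ck_fd.simps, rule exI[of _ "\<lambda>x h. L (f' x h)"])
      (use f' Suc.IH Suc.prems(1) in \<open>auto intro: bounded_linear.has_derivative\<close>)
qed

lemma Ck_fd_bilinear: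
  assumes "bounded_bilinear pr"
  shows "Ck_fd k a S \<Longrightarrow> Ck_fd k b S \<Longrightarrow> Ck_fd k (\<lambda>x. pr (a x) (b x)) S"
proof (induction k arbitrary: a b)
  case 0
  then show ?case using bounded_bilinear.continuous_on[OF assms] by simp
next
  case (Suc k)
  obtain a' where a': "\<forall>x\<in>S. (a has_derivative a' x) (at x)" "\<forall>i\<in>Basis. Ck_fd k (\<lambda>x. a' x i) S"
    using Suc.prems(1) by (simp only: Ck_fd.simps) blast
  obtain b' where b': "\<forall>x\<in>S. (b has_derivative b' x) (at x)" "\<forall>i\<in>Basis. Ck_fd k (\<lambda>x. b' x i) S"
    using Suc.prems(2) by (simp only: Ck_fd.simps) blast
  have ab: "Ck_fd k a S" "Ck_fd k b S" using Suc.prems Ck_fd_Suc_imp by blast+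
  show ?case
    by (simp only: Ck_fd.simps, rule exI[of _ "\<lambda>x h. pr (a x) (b' x h) + pr (a' x h) (b x)"])
      (use a' b' ab Suc.IH in \<open>auto intro!: bounded_bilinear.FDERIV[OF assms] Ck_fd_add\<close>)
qed

lemma Ck_fd_scaleR: "Ck_fd k a S \<Longrightarrow> Ck_fd k b S \<Longrightarrow> Ck_fd k (\<lambda>x. a x *\<^sub>R b x) S"
  by (rule Ck_fd_bilinear[OF bounded_bilinear_scaleR])

lemma Ck_fd_inner: "Ck_fd k a S \<Longrightarrow> Ck_fd k b S \<Longrightarrow> Ck_fd k (\<lambda>x. a x \<bullet> b x) S"
  by (rule Ck_fd_bilinear[OF bounded_bilinear_inner])

lemma Ck_fd_mult: "Ck_fd k (a::_\<Rightarrow>real) S \<Longrightarrow> Ck_fd k b S \<Longrightarrow> Ck_fd k (\<lambda>x. a x * b x) S"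
  by (rule Ck_fd_bilinear[OF bounded_bilinear_mult])

lemma Ck_fd_diff: "Ck_fd k f S \<Longrightarrow> Ck_fd k g S \<Longrightarrow> Ck_fd k (\<lambda>x. f x - g x) S"
proof -
  assume "Ck_fd k f S" "Ck_fd k g S"
  then have "Ck_fd k (\<lambda>x. f x + (-1) *\<^sub>R g x) S" by (intro Ck_fd_add Ck_fd_scaleR Ck_fd_const)
  then show ?thesis by simp
qed

lemma Ck_fd_fst: "Ck_fd k (\<lambda>x. fst x) S"
  using Ck_fd_linear[OF bounded_linear_fst Ck_fd_ident] .

lemma Ck_fd_snd: "Ck_fd k (\<lambda>x. snd x) S"
  using Ck_fd_linear[OF bounded_linear_snd Ck_fd_ident] .

lemma Ck_fd_Pair: "Ck_fd k a S \<Longrightarrow> Ck_fd k b S \<Longrightarrow> Ck_fd k (\<lambda>x. (a x, b x)) S"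
  using Ck_fd_add[OF Ck_fd_linear[of "\<lambda>u. (u, 0)" k a S] Ck_fd_linear[of "\<lambda>u. (0, u)" k b S]]
  by (simp add: bounded_linear_Pair bounded_linear_zero bounded_linear_ident)

text \<open>The derivative of g o f applied to a basis vector i is
  expanded in the basis, sum over j of (f' x i . j) g'(f x) j, so that the
  induction hypothesis applies to each partial derivative of g.\<close>
lemma Ck_fd_compose:
  fixes f :: "'a::euclidean_space \<Rightarrow> 'b::euclidean_space" and g :: "'b \<Rightarrow> 'c::real_normed_vector"
  shows "Ck_fd k g T \<Longrightarrow> Ck_fd k f S \<Longrightarrow> f ` S \<subseteq> T \<Longrightarrow> Ck_fd k (\<lambda>x. g (f x)) S"
proof (induction k arbitrary: f g)
  case 0
  then show ?case by (auto intro: continuous_on_compose2)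
next
  case (Suc k)
  obtain g' where g': "\<forall>y\<in>T. (g has_derivative g' y) (at y)" "\<forall>j\<in>Basis. Ck_fd k (\<lambda>y. g' y j) T"
    using Suc.prems(1) by (simp only: Ck_fd.simps) blast
  obtain f' where f': "\<forall>x\<in>S. (f has_derivative f' x) (at x)" "\<forall>i\<in>Basis. Ck_fd k (\<lambda>x. f' x i) S"
    using Suc.prems(2) by (simp only: Ck_fd.simps) blast
  have f_k: "Ck_fd k f S" using Suc.prems(2) Ck_fd_Suc_imp by blast
  define h' where "h' x v = (\<Sum>j\<in>Basis. (f' x v \<bullet> j) *\<^sub>R g' (f x) j)" for x v
  have chain: "((\<lambda>x. g (f x)) has_derivative h' x) (at x)" if x: "x \<in> S" for x
  proof -
    have fx: "f x \<in> T" using x Suc.prems(3) by blast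
    have lin: "linear (g' (f x))" using g'(1) fx has_derivative_linear by blast
    have expand: "g' (f x) (f' x v) = h' x v" for v
    proof -
      have "g' (f x) (f' x v) = g' (f x) (\<Sum>j\<in>Basis. (f' x v \<bullet> j) *\<^sub>R j)"
        by (simp add: euclidean_representation)
      also have "\<dots> = h' x v"
        unfolding h'_def using lin by (simp add: linear_sum linear_scale)
      finally show ?thesis .
    qed
    have "((\<lambda>x. g (f x)) has_derivative (\<lambda>v. g' (f x) (f' x v))) (at x)"
      using diff_chain_at[of f "f' x" x g "g' (f x)"] f'(1) g'(1) x fx by (simp add: o_def)
    then show ?thesis by (simp add: expand)
  qed
  have "Ck_fd k (\<lambda>x. h' x i) S" if i: "i \<in> Basis" for i
    unfolding h'_def
    using f'(2) i g'(2) f_k Suc.prems(3)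
    by (intro Ck_fd_sum Ck_fd_scaleR Ck_fd_inner Ck_fd_const Suc.IH) auto
  with chain show ?case by (simp only: Ck_fd.simps) blast
qed

lemma Ck_fd_inverse_real: "Ck_fd k (\<lambda>y::real. inverse y) {y. y \<noteq> 0}"
proof (induction k)
  case 0
  then show ?case by (simp add: continuous_on_inverse continuous_on_id)
next
  case (Suc k)
  have "Ck_fd k (\<lambda>y. - 1 *\<^sub>R (inverse y * inverse y)) {y::real. y \<noteq> 0}"
    by (intro Ck_fd_scaleR Ck_fd_const Ck_fd_mult Suc.IH)
  note partial = this
  show ?case
    by (simp only: Ck_fd.simps, rule exI[of _ "\<lambda>y h. - (inverse y * h * inverse y)"])
      (use partial in \<open>auto intro!: has_derivative_inverse'\<close>)
qed

lemma Ck_fd_inverse: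
  "Ck_fd k (f::_\<Rightarrow>real) S \<Longrightarrow> (\<And>x. x \<in> S \<Longrightarrow> f x \<noteq> 0) \<Longrightarrow> Ck_fd k (\<lambda>x. inverse (f x)) S"
  by (rule Ck_fd_compose[OF Ck_fd_inverse_real]) auto

subsection \<open>Relation to iterated partial derivatives\<close>

definition partials_upto ::
    "nat \<Rightarrow> ('a::euclidean_space \<Rightarrow> 'b::real_normed_vector) \<Rightarrow> 'a set \<Rightarrow> ('a list \<Rightarrow> 'a \<Rightarrow> 'b) \<Rightarrow> bool" where
  "partials_upto k f S D \<longleftrightarrow>
     (\<forall>x\<in>S. D [] x = f x) \<and>
     (\<forall>ds. length ds \<le> k \<and> set ds \<subseteq> Basis \<longrightarrow> continuous_on S (D ds)) \<and>
     (\<forall>ds i. length ds < k \<and> set ds \<subseteq> Basis \<and> i \<in> Basis \<longrightarrow>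
        (\<forall>x\<in>S. ((\<lambda>s. D ds (x + s *\<^sub>R i)) has_vector_derivative D (i # ds) x) (at 0)))"

lemma Ck_on_iff_partials_upto: "Ck_on k f S \<longleftrightarrow> (\<exists>D. partials_upto k f S D)"
  unfolding Ck_on_def partials_upto_def by simp

lemma has_derivative_directional:
  assumes "(f has_derivative f') (at x)"
  shows "((\<lambda>s. f (x + s *\<^sub>R i)) has_vector_derivative f' i) (at 0)"
proof -
  have line: "((\<lambda>s. x + s *\<^sub>R i) has_derivative (\<lambda>s. s *\<^sub>R i)) (at 0)"
    by (auto intro!: derivative_eq_intros)
  have "((\<lambda>s. f (x + s *\<^sub>R i)) has_derivative (\<lambda>s. f' (s *\<^sub>R i))) (at 0)"
    using diff_chain_at[OF line, of f f'] assms by (simp add: o_def)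
  moreover have "f' (s *\<^sub>R i) = s *\<^sub>R f' i" for s
    using assms by (meson has_derivative_linear linear_scale)
  ultimately show ?thesis by (simp add: has_vector_derivative_def)
qed

text \<open>Induction step from Ck_fd to Ck_on: choosing for each basis vector i a
  system DD i for the i-th partial derivative of f, the system for f sends a
  nonempty list ds to DD (last ds) (butlast ds).\<close>
lemma Ck_on_SucI:
  assumes deriv: "\<And>x. x \<in> S \<Longrightarrow> (f has_derivative f' x) (at x)"
    and cont: "continuous_on S f"
    and partials: "\<And>i. i \<in> Basis \<Longrightarrow> Ck_on k (\<lambda>x. f' x i) S"
  shows "Ck_on (Suc k) f S"
proof -
  have "\<forall>i\<in>Basis. \<exists>D. partials_upto k (\<lambda>x. f' x i) S D"
    using partials by (simp add: Ck_on_iff_partials_upto)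
  then obtain DD where "\<forall>i\<in>Basis. partials_upto k (\<lambda>x. f' x i) S (DD i)"
    by (auto dest: bchoice)
  then have DD0: "\<And>i x. i \<in> Basis \<Longrightarrow> x \<in> S \<Longrightarrow> DD i [] x = f' x i"
    and DDc: "\<And>i ds. i \<in> Basis \<Longrightarrow> length ds \<le> k \<Longrightarrow> set ds \<subseteq> Basis \<Longrightarrow>
      continuous_on S (DD i ds)"
    and DDd: "\<And>i ds j x. i \<in> Basis \<Longrightarrow> length ds < k \<Longrightarrow> set ds \<subseteq> Basis \<Longrightarrow> j \<in> Basis \<Longrightarrow>
      x \<in> S \<Longrightarrow> ((\<lambda>s. DD i ds (x + s *\<^sub>R j)) has_vector_derivative DD i (j # ds) x) (at 0)"
    unfolding partials_upto_def by blast+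
  define D where "D ds = (if ds = [] then f else DD (last ds) (butlast ds))" for ds
  have butlast: "last ds \<in> Basis" "length (butlast ds) < length ds" "set (butlast ds) \<subseteq> Basis"
    if "ds \<noteq> []" "set ds \<subseteq> Basis" for ds :: "'a list"
    using that by (auto dest: in_set_butlastD)
  show ?thesis unfolding Ck_on_iff_partials_upto partials_upto_def
  proof (rule exI[of _ D], intro conjI allI impI ballI)
    fix ds :: "'a list" assume ds: "length ds \<le> Suc k \<and> set ds \<subseteq> Basis"
    show "continuous_on S (D ds)"
    proof (cases "ds = []")
      case False
      then show ?thesis using butlast[OF False] ds by (auto simp: D_def intro!: DDc)
    qed (simp add: D_def cont)
  next
    fix ds :: "'a list" and i x :: 'a assume ds: "length ds < Suc k \<and> set ds \<subseteq> Basis \<and> i \<in> Basis"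
      and x: "x \<in> S"
    show "((\<lambda>s. D ds (x + s *\<^sub>R i)) has_vector_derivative D (i # ds) x) (at 0)"
    proof (cases "ds = []")
      case True
      then show ?thesis
        using has_derivative_directional[OF deriv[OF x]] DD0 ds x by (simp add: D_def)
    next
      case False
      have "length (butlast ds) < k" using False ds by (cases ds) auto
      then show ?thesis using False butlast[OF False] ds x by (simp add: D_def DDd)
    qed
  qed (simp add: D_def)
qed

lemma Ck_fd_imp_Ck_on: "Ck_fd k f S \<Longrightarrow> Ck_on k f S"
proof (induction k arbitrary: f)
  case 0
  then show ?case unfolding Ck_on_iff_partials_upto partials_upto_def by (intro exI[of _ "\<lambda>ds. f"]) simp
next
  case (Suc k)
  then obtain f' where "\<forall>x\<in>S. (f has_derivative f' x) (at x)" "\<forall>i\<in>Basis. Ck_fd k (\<lambda>x. f' x i) S"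
    by (simp only: Ck_fd.simps) blast
  with Suc show ?case by (intro Ck_on_SucI Ck_fd_continuous[OF Suc.prems]) auto
qed

text \<open>Conversely, for curves defined on the whole real line, Ck_on implies Ck_fd:
  the only basis direction is 1, so partial derivatives are vector derivatives.\<close>
lemma Ck_on_real_imp_Ck_fd:
  fixes f :: "real \<Rightarrow> 'b::real_normed_vector"
  assumes "Ck_on K f UNIV"
  shows "Ck_fd K f UNIV"
proof -
  obtain D where D: "partials_upto K f UNIV D"
    using assms unfolding Ck_on_iff_partials_upto by blast
  then have D0: "\<forall>x. D [] x = f x"
    and cont: "\<forall>ds. length ds \<le> K \<and> set ds \<subseteq> Basis \<longrightarrow> continuous_on UNIV (D ds)"
    and partial: "\<forall>ds i. length ds < K \<and> set ds \<subseteq> Basis \<and> i \<in> Basis \<longrightarrow>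
           (\<forall>x. ((\<lambda>s. D ds (x + s *\<^sub>R i)) has_vector_derivative D (i # ds) x) (at 0))"
    unfolding partials_upto_def by auto
  have deriv: "((\<lambda>s. D ds (x + s)) has_vector_derivative D (1 # ds) x) (at 0)"
    if "length ds < K" "set ds \<subseteq> Basis" for ds x
    using partial that by auto
  have vd: "(D ds has_vector_derivative D (1 # ds) x) (at x)"
    if "length ds < K" "set ds \<subseteq> Basis" for ds x
  proof -
    have shift: "((\<lambda>y. y - x) has_vector_derivative 1) (at x)"
      unfolding has_vector_derivative_def by (auto intro!: derivative_eq_intros)
    have "((\<lambda>s. D ds (x + s)) has_vector_derivative D (1 # ds) x) (at ((\<lambda>y. y - x) x))"
      using deriv[OF that] by simp
    from vector_diff_chain_at[OF shift this] show ?thesis by (simp add: o_def)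
  qed
  have "Ck_fd m (D ds) UNIV" if "length ds + m \<le> K" "set ds \<subseteq> Basis" for m ds
    using that
  proof (induction m arbitrary: ds)
    case 0
    then show ?case using cont by simp
  next
    case (Suc m)
    have "Ck_fd m (D (1 # ds)) UNIV" using Suc by simp
    then show ?case
      using vd[of ds] Suc.prems
      by (simp only: Ck_fd.simps, intro exI[of _ "\<lambda>x h. h *\<^sub>R D (1 # ds) x"])
        (auto simp: has_vector_derivative_def)
  qed
  from this[of "[]" K] have "Ck_fd K (D []) UNIV" by simp
  moreover have "D [] = f" using D0 by auto
  ultimately show ?thesis by simp
qed

lemma Ck_fd_vector_derivative:
  fixes f :: "real \<Rightarrow> 'b::real_normed_vector"
  assumes "Ck_fd (Suc k) f UNIV"
  shows "Ck_fd k (\<lambda>x. vector_derivative f (at x)) UNIV"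
proof -
  obtain f' where f': "\<And>x. (f has_derivative f' x) (at x)" "Ck_fd k (\<lambda>x. f' x 1) UNIV"
    using assms by (simp only: Ck_fd.simps) auto
  have vd: "(f has_vector_derivative f' x 1) (at x)" for x
  proof -
    have "f' x h = h *\<^sub>R f' x 1" for h
      using linear_scale[OF has_derivative_linear[OF f'(1)[of x]], of h 1]
      by (simp only: real_scaleR_def mult_1_right)
    then have "(\<lambda>h. h *\<^sub>R f' x 1) = f' x" by (intro ext) (rule sym)
    then show ?thesis using f'(1)[of x] unfolding has_vector_derivative_def by simp
  qed
  have "(\<lambda>x. vector_derivative f (at x)) = (\<lambda>x. f' x 1)"
    by (intro ext vector_derivative_at[OF vd])
  then show ?thesis using f'(2) by simp
qed

section \<open>Zeros of parametrised real equations\<close>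

lemma continuous_at_root_of_increasing:
  fixes F :: "'a::t2_space \<Rightarrow> real \<Rightarrow> real"
  assumes mono: "\<And>x s s'. s < s' \<Longrightarrow> F x s < F x s'"
    and cont: "\<And>s. continuous (at y) (\<lambda>x. F x s)"
    and root: "\<And>x. F x (g x) = 0"
  shows "continuous (at y) g"
proof -
  have below: "g x < a" if "F x a > 0" for x a
    using that mono[of a "g x" x] root[of x] by (cases "a < g x") (auto simp: not_less le_less)
  have above: "a < g x" if "F x a < 0" for x a
    using that mono[of "g x" a x] root[of x] by (cases "g x < a") (auto simp: not_less le_less)
  show ?thesis unfolding continuous_at
  proof (rule order_tendstoI)
    fix a assume "g y < a"
    then have "0 < F y a" using mono[of "g y" a y] root[of y] by simp
    with cont[of a] have "eventually (\<lambda>x. 0 < F x a) (at y)"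
      unfolding continuous_at by (rule order_tendstoD(1))
    then show "eventually (\<lambda>x. g x < a) (at y)" by (rule eventually_mono) (rule below)
  next
    fix a assume "a < g y"
    then have "F y a < 0" using mono[of a "g y" y] root[of y] by simp
    with cont[of a] have "eventually (\<lambda>x. F x a < 0) (at y)"
      unfolding continuous_at by (rule order_tendstoD(2))
    then show "eventually (\<lambda>x. a < g x) (at y)" by (rule eventually_mono) (rule above)
  qed
qed

text \<open>This is the inverse function theorem
  applied to (r, s) \<mapsto> (r, P r s), whose inverse is (r, t) \<mapsto> (r, g (r, t)).\<close>
lemma implicit_function_derivative:
  fixes P :: "'a::euclidean_space \<Rightarrow> real \<Rightarrow> real" and g :: "'a \<times> real \<Rightarrow> real"
  assumes solves: "\<And>z. P (fst z) (g z) = snd z"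
    and cont: "continuous (at z) g"
    and dP: "((\<lambda>p. P (fst p) (snd p)) has_derivative (\<lambda>h. Pr (fst h) + Ps * snd h)) (at (fst z, g z))"
    and lin: "linear Pr" and Ps: "Ps \<noteq> 0"
  shows "(g has_derivative (\<lambda>k. (snd k - Pr (fst k)) / Ps)) (at z)"
proof -
  define G where "G y = (fst y, g y)" for y
  define G' where "G' k = (fst k, (snd k - Pr (fst k)) / Ps)" for k
  have "((\<lambda>p. (fst p, P (fst p) (snd p))) has_derivative (\<lambda>h. (fst h, Pr (fst h) + Ps * snd h)))
      (at (G z))"
    unfolding G_def using dP by (intro has_derivative_Pair has_derivative_fst[OF has_derivative_ident])
  moreover have "linear G'"
    by (rule linearI) (use Ps in \<open>auto simp: G'_def linear_add[OF lin] linear_scale[OF lin] field_simps\<close>)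
  then have "bounded_linear G'" by (simp add: linear_conv_bounded_linear)
  moreover have "G' \<circ> (\<lambda>h. (fst h, Pr (fst h) + Ps * snd h)) = id"
    using Ps by (auto simp: G'_def fun_eq_iff)
  moreover have "continuous (at z) G"
    unfolding G_def by (intro continuous_Pair continuous_fst continuous_ident cont)
  ultimately have "(G has_derivative G') (at z)"
    by (rule has_derivative_inverse_basic[where T=UNIV]) (simp_all add: G_def solves)
  from has_derivative_snd[OF this] show ?thesis by (simp add: G_def G'_def)
qed

section \<open>The retarded time of an admissible trajectory\<close>

context
  fixes r2 :: "real \<Rightarrow> real^3"
  assumes adm: "admissible r2"
begin

lemma r2_Ck_fd_3: "Ck_fd 3 r2 UNIV"
  using adm unfolding admissible_def by (auto intro: Ck_on_real_imp_Ck_fd)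

lemma r2_has_vel: "(r2 has_vector_derivative vel r2 s) (at s)"
proof -
  obtain r2' where "\<And>s. (r2 has_derivative r2' s) (at s)"
    using r2_Ck_fd_3 by (simp only: numeral_3_eq_3 Ck_fd.simps) auto
  then have "r2 differentiable (at s)" by (auto simp: differentiable_def)
  then show ?thesis unfolding vel_def by (rule vector_derivative_works[THEN iffD1])
qed

lemma r2_continuous: "continuous_on UNIV r2"
  using Ck_fd_continuous[OF r2_Ck_fd_3] .

definition past_speed :: "real \<Rightarrow> real" where
  "past_speed t1 = (SUP u\<in>{..t1}. norm (vel r2 u))"

lemma past_speed_less_1: "past_speed t1 < 1"
  using adm unfolding admissible_def past_speed_def by auto

lemma vel_le_past_speed: "u \<le> t1 \<Longrightarrow> norm (vel r2 u) \<le> past_speed t1"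
  using adm unfolding admissible_def past_speed_def by (intro cSUP_upper) auto

lemma r2_lipschitz: "s \<le> s' \<Longrightarrow> norm (r2 s' - r2 s) \<le> past_speed s' * (s' - s)"
proof -
  assume ss: "s \<le> s'"
  have "norm (r2 s' - r2 s) \<le> past_speed s' * norm (s' - s)"
  proof (rule differentiable_bound[of "{s..s'}" r2 "\<lambda>x h. h *\<^sub>R vel r2 x"])
    show "(r2 has_derivative (\<lambda>h. h *\<^sub>R vel r2 x)) (at x within {s..s'})" for x
      using r2_has_vel[of x] unfolding has_vector_derivative_def by (rule has_derivative_at_withinI)
    show "onorm (\<lambda>h. h *\<^sub>R vel r2 x) \<le> past_speed s'" if "x \<in> {s..s'}" for x
      using vel_le_past_speed[of x s'] that onorm_scaleR_left[OF bounded_linear_ident, of "vel r2 x"]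
      by (simp add: onorm_id)
  qed (use ss in auto)
  then show ?thesis using ss by simp
qed

lemma r2_subluminal: "s < s' \<Longrightarrow> norm (r2 s' - r2 s) < s' - s"
proof -
  assume "s < s'"
  then have "norm (r2 s' - r2 s) \<le> past_speed s' * (s' - s)" using r2_lipschitz by simp
  also have "\<dots> < 1 * (s' - s)"
    using past_speed_less_1[of s'] \<open>s < s'\<close> by (intro mult_strict_right_mono) auto
  finally show ?thesis by simp
qed

definition cone :: "real^3 \<Rightarrow> real \<Rightarrow> real \<Rightarrow> real" where
  "cone r1 t s = s + norm (r1 - r2 s) - t"

lemma cone_strict_mono: "s < s' \<Longrightarrow> cone r1 t s < cone r1 t s'"
proof -
  assume "s < s'"
  have "norm (r1 - r2 s) \<le> norm (r1 - r2 s') + norm (r2 s' - r2 s)"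
    using norm_triangle_ineq[of "r1 - r2 s'" "r2 s' - r2 s"] by simp
  then show ?thesis using r2_subluminal[OF \<open>s < s'\<close>] unfolding cone_def by simp
qed

text \<open>Existence of a zero: cone is nonnegative at t and, by the Lipschitz bound,
  nonpositive at t - |r1 - r2 t| / (1 - c), where c is the past speed bound.\<close>
lemma cone_has_root: "\<exists>s. cone r1 t s = 0"
proof -
  define s0 where "s0 = t - norm (r1 - r2 t) / (1 - past_speed t)"
  have pos: "1 - past_speed t > 0" using past_speed_less_1 by simp
  have s0t: "s0 \<le> t" unfolding s0_def using pos by simp
  have eq: "(1 - past_speed t) * (t - s0) = norm (r1 - r2 t)" unfolding s0_def using pos by simp
  have "norm (r1 - r2 s0) \<le> norm (r1 - r2 t) + norm (r2 t - r2 s0)"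
    using norm_triangle_ineq[of "r1 - r2 t" "r2 t - r2 s0"] by simp
  also have "\<dots> \<le> norm (r1 - r2 t) + past_speed t * (t - s0)" using r2_lipschitz[OF s0t] by simp
  finally have "cone r1 t s0 \<le> 0" unfolding cone_def using eq by (simp add: algebra_simps)
  moreover have "0 \<le> cone r1 t t" unfolding cone_def by simp
  moreover have "continuous_on {s0..t} (cone r1 t)"
    unfolding cone_def by (intro continuous_intros continuous_on_subset[OF r2_continuous]) auto
  ultimately show ?thesis using IVT'[of "cone r1 t" s0 0 t] s0t by auto
qed

lemma retarded_time_ex1: "\<exists>!\<tau>. \<tau> \<le> t \<and> \<tau> = t - norm (r1 - r2 \<tau>)"
proof -
  have iff: "cone r1 t s = 0 \<longleftrightarrow> s \<le> t \<and> s = t - norm (r1 - r2 s)" for s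
    unfolding cone_def by auto
  have "a = b" if "cone r1 t a = 0" "cone r1 t b = 0" for a b
    using that cone_strict_mono[of a b r1 t] cone_strict_mono[of b a r1 t]
    by (cases a b rule: linorder_cases) auto
  then show ?thesis using cone_has_root[of r1 t] unfolding iff[symmetric] by blast
qed

lemma ret_time_eq: "ret_time r2 r1 t = t - norm (r1 - r2 (ret_time r2 r1 t))"
  using theI'[OF retarded_time_ex1] unfolding ret_time_def by blast

lemma ret_time_unique: "\<rho> = t - norm (r1 - r2 \<rho>) \<Longrightarrow> ret_time r2 r1 t = \<rho>"
  unfolding ret_time_def
  by (rule the1_equality[OF retarded_time_ex1]) (use norm_ge_zero[of "r1 - r2 \<rho>"] in linarith)

definition tau :: "(real^3) \<times> real \<Rightarrow> real" where
  "tau x = ret_time r2 (fst x) (snd x)"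

definition e_dir :: "(real^3) \<times> real \<Rightarrow> real^3" where
  "e_dir x = inverse (snd x - tau x) *\<^sub>R (fst x - r2 (tau x))"

lemma delay_tau: "snd x - tau x = norm (fst x - r2 (tau x))"
  using ret_time_eq[of "fst x" "snd x"] unfolding tau_def by linarith

lemma Gset_iff: "x \<in> Gset r2 \<longleftrightarrow> snd x - tau x > 0"
  by (cases x) (simp add: Gset_def delay_def tau_def)

lemma e_dir_unit: "x \<in> Gset r2 \<Longrightarrow> norm (e_dir x) = 1"
  unfolding e_dir_def Gset_iff delay_tau by simp

lemma doppler_pos: "norm e = 1 \<Longrightarrow> 0 < 1 - e \<bullet> vel r2 s"
proof -
  assume e: "norm e = 1"
  have "e \<bullet> vel r2 s \<le> norm e * norm (vel r2 s)" by (rule norm_cauchy_schwarz)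
  also have "\<dots> < 1" using e adm unfolding admissible_def by simp
  finally show ?thesis by simp
qed

text \<open>The retarded time is continuous, being the zero of the increasing family cone.\<close>
lemma tau_continuous: "continuous (at x) tau"
proof (rule continuous_at_root_of_increasing)
  show "cone (fst y) (snd y) (tau y) = 0" for y
    using delay_tau[of y] unfolding cone_def by simp
  show "continuous (at x) (\<lambda>y. cone (fst y) (snd y) s)" for s
    unfolding cone_def by (intro continuous_intros)
qed (rule cone_strict_mono)

text \<open>Derivative of the retarded time, by implicit differentiation of
  tau + |r1 - r2 tau| = t: d tau = (dt - e . dr1) / (1 - e . v).\<close>
lemma tau_has_derivative:
  assumes xG: "x \<in> Gset r2"
  shows "(tau has_derivative (\<lambda>h. (snd h - e_dir x \<bullet> fst h) / (1 - e_dir x \<bullet> vel r2 (tau x)))) (at x)"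
proof -
  define w where "w = fst x - r2 (tau x)"
  define e where "e = e_dir x"
  define v where "v = vel r2 (tau x)"
  have w0: "w \<noteq> 0" using xG unfolding Gset_iff delay_tau w_def by simp
  have e: "e = sgn w" unfolding e_def e_dir_def delay_tau w_def by (simp add: sgn_div_norm)
  have r2d: "(r2 has_derivative (\<lambda>k. k *\<^sub>R v)) (at (snd (fst x, tau x)))"
    using r2_has_vel[of "tau x"] unfolding v_def has_vector_derivative_def by simp
  have dw: "((\<lambda>p. fst p - r2 (snd p)) has_derivative (\<lambda>h. fst h - snd h *\<^sub>R v)) (at (fst x, tau x))"
    by (intro has_derivative_diff has_derivative_fst[OF has_derivative_ident]
        has_derivative_compose[OF has_derivative_snd[OF has_derivative_ident] r2d, simplified])
  have dnorm: "(norm has_derivative (\<lambda>h. h \<bullet> e)) (at ((\<lambda>p. fst p - r2 (snd p)) (fst x, tau x)))"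
    using has_derivative_norm[OF w0] unfolding e w_def by simp
  have "((\<lambda>p. snd p + norm (fst p - r2 (snd p))) has_derivative
      (\<lambda>h. snd h + (fst h - snd h *\<^sub>R v) \<bullet> e)) (at (fst x, tau x))"
    by (intro has_derivative_add has_derivative_snd[OF has_derivative_ident]
        has_derivative_compose[OF dw dnorm, simplified])
  then have dP: "((\<lambda>p. snd p + norm (fst p - r2 (snd p))) has_derivative
      (\<lambda>h. e \<bullet> fst h + (1 - e \<bullet> v) * snd h)) (at (fst x, tau x))"
    by (rule has_derivative_eq_rhs) (auto simp: fun_eq_iff inner_diff_left inner_commute algebra_simps)
  have "(tau has_derivative (\<lambda>k. (snd k - e \<bullet> fst k) / (1 - e \<bullet> v))) (at x)"
  proof (rule implicit_function_derivative[OF _ tau_continuous dP])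
    show "tau z + norm (fst z - r2 (tau z)) = snd z" for z using delay_tau[of z] by simp
    show "linear ((\<bullet>) e)" by (rule bounded_linear.linear[OF bounded_linear_inner_right])
    show "1 - e \<bullet> v \<noteq> 0"
      using doppler_pos[OF e_dir_unit[OF xG], of "tau x"] unfolding e_def v_def by linarith
  qed
  then show ?thesis unfolding e_def v_def .
qed

section \<open>Smoothness of phi and psi\<close>

lemma e_dir_Ck_fd:
  assumes "Ck_fd k tau (Gset r2)" "Ck_fd k r2 UNIV"
  shows "Ck_fd k e_dir (Gset r2)"
proof -
  have "Ck_fd k (\<lambda>x. r2 (tau x)) (Gset r2)" by (rule Ck_fd_compose[OF assms(2,1)]) simp
  moreover have "Ck_fd k (\<lambda>x. snd x - tau x) (Gset r2)" by (rule Ck_fd_diff[OF Ck_fd_snd assms(1)])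
  ultimately show ?thesis
    unfolding e_dir_def[abs_def] using Gset_iff
    by (intro Ck_fd_scaleR Ck_fd_inverse Ck_fd_diff[OF Ck_fd_fst]) auto
qed

text \<open>If r2 is C^K then so is tau: by induction on k \<le> K, the derivative
  formula of tau only involves tau, e_dir and vel r2 o tau, which are C^k by
  the induction hypothesis.\<close>
lemma tau_Ck_fd:
  assumes r2_K: "Ck_fd K r2 UNIV"
  shows "Ck_fd K tau (Gset r2)"
proof -
  have "Ck_fd k tau (Gset r2)" if "k \<le> K" for k
    using that
  proof (induction k)
    case 0
    then show ?case using tau_continuous by (simp add: continuous_at_imp_continuous_on)
  next
    case (Suc k)
    have tau_k: "Ck_fd k tau (Gset r2)" using Suc by simp
    have r2_Suc: "Ck_fd (Suc k) r2 UNIV" using Ck_fd_le[OF Suc.prems r2_K] .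
    have vel_k: "Ck_fd k (vel r2) UNIV"
      using Ck_fd_vector_derivative[OF r2_Suc] unfolding vel_def[abs_def] .
    have e_k: "Ck_fd k e_dir (Gset r2)" by (rule e_dir_Ck_fd[OF tau_k Ck_fd_Suc_imp[OF r2_Suc]])
    have "1 - e_dir x \<bullet> vel r2 (tau x) \<noteq> 0" if "x \<in> Gset r2" for x
      using doppler_pos[OF e_dir_unit[OF that], of "tau x"] by linarith
    moreover have "Ck_fd k (\<lambda>x. vel r2 (tau x)) (Gset r2)"
      by (rule Ck_fd_compose[OF vel_k tau_k]) simp
    ultimately have "Ck_fd k (\<lambda>x. inverse (1 - e_dir x \<bullet> vel r2 (tau x))) (Gset r2)"
      by (intro Ck_fd_inverse Ck_fd_diff[OF Ck_fd_const] Ck_fd_inner[OF e_k]) auto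
    then have "Ck_fd k (\<lambda>x. (snd h - e_dir x \<bullet> fst h) / (1 - e_dir x \<bullet> vel r2 (tau x))) (Gset r2)"
      for h
      unfolding divide_inverse
      by (intro Ck_fd_mult Ck_fd_diff[OF Ck_fd_const] Ck_fd_inner[OF e_k Ck_fd_const])
    then show ?case using tau_has_derivative
      by (simp only: Ck_fd.simps)
        (intro exI[of _ "\<lambda>x h. (snd h - e_dir x \<bullet> fst h) / (1 - e_dir x \<bullet> vel r2 (tau x))"], auto)
  qed
  then show ?thesis by simp
qed

lemma phi_eq: "phi r2 = (\<lambda>x. (tau x, snd x - tau x, e_dir x))"
  by (auto simp: fun_eq_iff phi_def delay_def tau_def edir_def e_dir_def inverse_eq_divide)

lemma phi_Ck_fd: "Ck_fd K r2 UNIV \<Longrightarrow> Ck_fd K (phi r2) (Gset r2)"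
  unfolding phi_eq
  by (intro Ck_fd_Pair tau_Ck_fd Ck_fd_diff[OF Ck_fd_snd] e_dir_Ck_fd)

text \<open>psi is C^K on all of R x R x R^3, an open neighbourhood of G1.\<close>
lemma psi_Ck_fd: "Ck_fd K r2 UNIV \<Longrightarrow> Ck_fd K (psi r2) UNIV"
proof -
  assume r2_K: "Ck_fd K r2 UNIV"
  have "Ck_fd K (\<lambda>p::real \<times> real \<times> (real^3). fst (snd p)) UNIV"
    by (rule Ck_fd_compose[OF Ck_fd_fst[of K UNIV] Ck_fd_snd]) simp
  moreover have "Ck_fd K (\<lambda>p::real \<times> real \<times> (real^3). snd (snd p)) UNIV"
    by (rule Ck_fd_compose[OF Ck_fd_snd[of K UNIV] Ck_fd_snd]) simp
  moreover have "Ck_fd K (\<lambda>p::real \<times> real \<times> (real^3). r2 (fst p)) UNIV"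
    by (rule Ck_fd_compose[OF r2_K Ck_fd_fst]) simp
  moreover have "psi r2 = (\<lambda>p. (r2 (fst p) + fst (snd p) *\<^sub>R snd (snd p), fst p + fst (snd p)))"
    by (auto simp: fun_eq_iff psi_def)
  ultimately show ?thesis by (auto intro!: Ck_fd_Pair Ck_fd_add Ck_fd_scaleR Ck_fd_fst)
qed

lemma phi_psi_Ck_on: "Ck_fd K r2 UNIV \<Longrightarrow> Ck_on K (phi r2) (Gset r2) \<and> Ck_on K (psi r2) UNIV"
  using Ck_fd_imp_Ck_on[OF phi_Ck_fd] Ck_fd_imp_Ck_on[OF psi_Ck_fd] by simp

section \<open>phi and psi are mutually inverse\<close>

lemma phi_in_G1: "x \<in> Gset r2 \<Longrightarrow> phi r2 x \<in> G1"
  unfolding phi_eq G1_def using e_dir_unit Gset_iff by auto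

lemma psi_phi: "x \<in> Gset r2 \<Longrightarrow> psi r2 (phi r2 x) = x"
  unfolding phi_eq psi_def e_dir_def using Gset_iff delay_tau[of x] by (simp add: prod_eq_iff)

text \<open>For (s, T, e) in G1 the event r2 s + T e at time s + T lies on the future
  light cone of r2 s, so its retarded time is s (by uniqueness) and its delay T.\<close>
lemma psi_in_G_and_phi_psi: "y \<in> G1 \<Longrightarrow> psi r2 y \<in> Gset r2 \<and> phi r2 (psi r2 y) = y"
proof -
  assume "y \<in> G1"
  then obtain s T e where y: "y = (s, T, e)" and T: "T > 0" and e: "norm e = 1"
    unfolding G1_def by auto
  have rt: "ret_time r2 (r2 s + T *\<^sub>R e) (s + T) = s"
    by (rule ret_time_unique) (use T e in simp)
  then have "delay r2 (r2 s + T *\<^sub>R e) (s + T) = T" unfolding delay_def by simp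
  then show ?thesis unfolding y psi_def phi_def Gset_def edir_def using rt T by simp
qed

end

theorem mainTheorem7:
  fixes r2 :: "real \<Rightarrow> real^3"
  assumes "admissible r2"
  shows "bij_betw (phi r2) (Gset r2) G1
       \<and> (\<forall>x\<in>Gset r2. psi r2 (phi r2 x) = x)
       \<and> (\<forall>y\<in>G1. psi r2 y \<in> Gset r2 \<and> phi r2 (psi r2 y) = y)
       \<and> Ck_on 1 (phi r2) (Gset r2) \<and> Ck_on_sub 1 (psi r2) G1
       \<and> (Cinf_on r2 UNIV \<longrightarrow> Cinf_on (phi r2) (Gset r2) \<and> Cinf_on_sub (psi r2) G1)"
proof -
  have left: "\<forall>x\<in>Gset r2. psi r2 (phi r2 x) = x" using psi_phi[OF assms] by blast
  have right: "\<forall>y\<in>G1. psi r2 y \<in> Gset r2 \<and> phi r2 (psi r2 y) = y"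
    using psi_in_G_and_phi_psi[OF assms] by blast
  have bij: "bij_betw (phi r2) (Gset r2) G1"
  proof (rule bij_betw_byWitness[where f'="psi r2"])
    show "phi r2 ` Gset r2 \<subseteq> G1" using phi_in_G1[OF assms] by blast
    show "psi r2 ` G1 \<subseteq> Gset r2" using right by blast
  qed (use left right in blast)+
  have "Ck_fd 1 r2 UNIV" by (rule Ck_fd_le[OF _ r2_Ck_fd_3[OF assms]]) simp
  note C1_maps = phi_psi_Ck_on[OF assms this]
  have C1: "Ck_on_sub 1 (psi r2) G1"
    unfolding Ck_on_sub_def using C1_maps by blast
  have Cinf: "Cinf_on (phi r2) (Gset r2) \<and> Cinf_on_sub (psi r2) G1" if "Cinf_on r2 UNIV"
  proof -
    have "Ck_fd K r2 UNIV" for K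
      using that Ck_on_real_imp_Ck_fd unfolding Cinf_on_def by blast
    note Ck_maps = phi_psi_Ck_on[OF assms this]
    have "Cinf_on (psi r2) UNIV" unfolding Cinf_on_def using Ck_maps by blast
    then have "Cinf_on_sub (psi r2) G1" unfolding Cinf_on_sub_def by blast
    moreover have "Cinf_on (phi r2) (Gset r2)" unfolding Cinf_on_def using Ck_maps by blast
    ultimately show ?thesis by blast
  qed
  show ?thesis using bij left right C1_maps C1 Cinf by blast
qed

end
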